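(* Let $R$ be a commutative unital ring, $G$ a group and $(\mathcal B_1,\Phi_1)\subseteq(\mathcal B_2,\Phi_2)$ a partial subaction of $G$ on generalized Boolean algebras; let $A_k=\mathrm{Lc}(R,\mathcal B_k)\rtimes_{\Phi_k}G$ with $A_1\subseteq A_2$. Suppose $\mathcal B_1$ is an ideal of $\mathcal B_2$ and $A_1$ is contained in no proper two-sided ideal of $A_2$. Then for every $U\in\mathcal B_2$ there exist an index set $I$, elements $U_i\in\mathcal B_1$ ($i\in I$) and a surjective left $A_2$-module homomorphism $\bigoplus_{i\in I}A_2(U_i\delta_e)\to A_2(U\delta_e)$.
   Context: A generalized Boolean algebra is a distributive relatively complemented lattice with least element $0$; an ideal is a subset closed under finite joins and under meets with arbitrary elements. A partial action $\Phi$ of $G$ on $\mathcal B$: ideals $\mathcal I_t$ and isomorphisms $\phi_t:\mathcal I_{t^{-1}}\to\mathcal I_t$ with $\mathcal I_e=\mathcal B$, $\phi_e=\mathrm{id}$, $\phi_s(\mathcal I_{s^{-1}}\cap\mathcal I_t)=\mathcal I_s\cap\mathcal I_{st}$, $\phi_s\phi_t=\phi_{st}$ where defined. A partial subaction: $\mathcal B_1\subseteq\mathcal B_2$ sub generalized Boolean algebra, $\mathcal I_{1,t}\subseteq\mathcal I_{2,t}$, $\phi_{2,t}$ restricting to $\phi_{1,t}$. $\mathrm{Lc}(R,\mathcal B)$ is the algebra of locally constant compactly supported $R$-valued functions on the Stone space of $\mathcal B$, spanned by idempotents $1_U$; $\mathrm{Lc}(R,\mathcal B)\rtimes_\Phi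 G=\bigoplus_g\mathrm{Lc}(R,\mathcal I_g)\delta_g$ with $U\delta_g:=1_U\delta_g$ and $(U\delta_g)(V\delta_h)=\phi_g(\phi_{g^{-1}}(U)\cap V)\delta_{gh}$. $A_1$ is identified with the $R$-span of $\{U\delta_g:U\in\mathcal I_{1,g}\}$ in $A_2$. *)

theory Defs
  imports Main
begin

text \<open>A generalized Boolean algebra is represented as a subset of a type of class
  boolean_algebra that contains bot and is closed under meets, joins and relative
  complements (differences). Every generalized Boolean algebra arises in this way
  (e.g. as a ring of subsets of its Stone space).\<close>

definition gba :: "'b::boolean_algebra set \<Rightarrow> bool" where
  "gba B \<longleftrightarrow> bot \<in> B \<and> (\<forall>x\<in>B. \<forall>y\<in>B. inf x y \<in> B \<and> sup x y \<in> B \<and> x - y \<in> B)"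

definition gba_ideal :: "'b::boolean_algebra set \<Rightarrow> 'b set \<Rightarrow> bool" where
  "gba_ideal B J \<longleftrightarrow> J \<subseteq> B \<and> bot \<in> J \<and> (\<forall>x\<in>J. \<forall>y\<in>J. sup x y \<in> J)
      \<and> (\<forall>x\<in>J. \<forall>y\<in>B. inf x y \<in> J)"

definition gba_iso :: "'b::boolean_algebra set \<Rightarrow> 'b set \<Rightarrow> ('b \<Rightarrow> 'b) \<Rightarrow> bool" where
  "gba_iso A C f \<longleftrightarrow> bij_betw f A C \<and>
      (\<forall>x\<in>A. \<forall>y\<in>A. f (inf x y) = inf (f x) (f y) \<and> f (sup x y) = sup (f x) (f y))"

section \<open>Partial actions (group written additively: e = 0, st = s + t, t^-1 = - t)\<close>

definition partial_action ::
  "'b::boolean_algebra set \<Rightarrow> ('g::group_add \<Rightarrow> 'b set) \<Rightarrow> ('g \<Rightarrow> 'b \<Rightarrow> 'b) \<Rightarrow> bool" where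
  "partial_action B I \<phi> \<longleftrightarrow> gba B \<and> (\<forall>t. gba_ideal B (I t)) \<and>
     (\<forall>t. gba_iso (I (- t)) (I t) (\<phi> t)) \<and> I 0 = B \<and> (\<forall>x\<in>B. \<phi> 0 x = x) \<and>
     (\<forall>s t. \<phi> s ` (I (- s) \<inter> I t) = I s \<inter> I (s + t)) \<and>
     (\<forall>s t. \<forall>x\<in>I (- t). \<phi> t x \<in> I (- s) \<longrightarrow> \<phi> s (\<phi> t x) = \<phi> (s + t) x)"

definition partial_subaction ::
  "'b::boolean_algebra set \<Rightarrow> ('g::group_add \<Rightarrow> 'b set) \<Rightarrow> ('g \<Rightarrow> 'b \<Rightarrow> 'b) \<Rightarrow>
   'b set \<Rightarrow> ('g \<Rightarrow> 'b set) \<Rightarrow> ('g \<Rightarrow> 'b \<Rightarrow> 'b) \<Rightarrow> bool" where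
  "partial_subaction B1 I1 \<phi>1 B2 I2 \<phi>2 \<longleftrightarrow>
     partial_action B1 I1 \<phi>1 \<and> partial_action B2 I2 \<phi>2 \<and> B1 \<subseteq> B2 \<and>
     (\<forall>t. I1 t \<subseteq> I2 t) \<and> (\<forall>t. \<forall>x\<in>I1 (- t). \<phi>2 t x = \<phi>1 t x)"

definition stone :: "'b::boolean_algebra set \<Rightarrow> 'b set set" where
  "stone B = {p. p \<subseteq> B \<and> p \<noteq> {} \<and> bot \<notin> p \<and>
      (\<forall>x\<in>p. \<forall>y\<in>B. x \<le> y \<longrightarrow> y \<in> p) \<and> (\<forall>x\<in>p. \<forall>y\<in>p. inf x y \<in> p) \<and>
      (\<forall>x\<in>B. \<forall>y\<in>B. sup x y \<in> p \<longrightarrow> x \<in> p \<or> y \<in> p)}"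

text \<open>The idempotent 1_U (characteristic function of the compact open set of U).\<close>
definition ind :: "'b::boolean_algebra set \<Rightarrow> 'b \<Rightarrow> 'b set \<Rightarrow> 'r::comm_ring_1" where
  "ind B U p = (if p \<in> stone B \<and> U \<in> p then 1 else 0)"

text \<open>Lc(R,J) for an ideal J of B, as the R-span of the 1_U, U in J (functions on the
  Stone space of B, extended by zero).\<close>
definition lc :: "'b::boolean_algebra set \<Rightarrow> 'b set \<Rightarrow> ('b set \<Rightarrow> 'r::comm_ring_1) set" where
  "lc B J = {f. \<exists>S c. finite S \<and> S \<subseteq> J \<and> f = (\<lambda>p. \<Sum>U\<in>S. c U * ind B U p)}"

text \<open>Induced partial homeomorphism theta_g : D_{g^-1} -> D_g of the Stone space and the
  induced partial action alpha_g : Lc(R,I_{g^-1}) -> Lc(R,I_g), alpha_g(1_U) = 1_{phi_g U}.\<close>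
definition theta :: "'b::boolean_algebra set \<Rightarrow> ('g::group_add \<Rightarrow> 'b set) \<Rightarrow> ('g \<Rightarrow> 'b \<Rightarrow> 'b)
    \<Rightarrow> 'g \<Rightarrow> 'b set \<Rightarrow> 'b set" where
  "theta B I \<phi> g p = {V\<in>B. \<exists>W\<in>p \<inter> I (- g). \<phi> g W \<le> V}"

definition alpha :: "'b::boolean_algebra set \<Rightarrow> ('g::group_add \<Rightarrow> 'b set) \<Rightarrow> ('g \<Rightarrow> 'b \<Rightarrow> 'b)
    \<Rightarrow> 'g \<Rightarrow> ('b set \<Rightarrow> 'r::comm_ring_1) \<Rightarrow> 'b set \<Rightarrow> 'r" where
  "alpha B I \<phi> g f q = (if q \<in> stone B \<and> q \<inter> I g \<noteq> {} then f (theta B I \<phi> (- g) q) else 0)"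

text \<open>An element is a finitely supported family g \<mapsto> a_g with a_g in Lc(R,I_g).\<close>
definition cp :: "'b::boolean_algebra set \<Rightarrow> ('g::group_add \<Rightarrow> 'b set)
    \<Rightarrow> ('g \<Rightarrow> 'b set \<Rightarrow> 'r::comm_ring_1) set" where
  "cp B I = {a. finite {g. a g \<noteq> (\<lambda>_. 0)} \<and> (\<forall>g. a g \<in> lc B (I g))}"

definition cp_zero :: "'g \<Rightarrow> 'b set \<Rightarrow> 'r::comm_ring_1" where
  "cp_zero = (\<lambda>g p. 0)"

definition cp_add :: "('g \<Rightarrow> 'b set \<Rightarrow> 'r::comm_ring_1) \<Rightarrow> ('g \<Rightarrow> 'b set \<Rightarrow> 'r) \<Rightarrow> 'g \<Rightarrow> 'b set \<Rightarrow> 'r" where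
  "cp_add a b = (\<lambda>g p. a g p + b g p)"

definition cp_smult :: "'r::comm_ring_1 \<Rightarrow> ('g \<Rightarrow> 'b set \<Rightarrow> 'r) \<Rightarrow> 'g \<Rightarrow> 'b set \<Rightarrow> 'r" where
  "cp_smult r a = (\<lambda>g p. r * a g p)"

text \<open>(a_g \<delta>_g)(b_h \<delta>_h) = alpha_g(alpha_{g^-1}(a_g) b_h) \<delta>_{gh}.\<close>
definition cp_mult :: "'b::boolean_algebra set \<Rightarrow> ('g::group_add \<Rightarrow> 'b set) \<Rightarrow> ('g \<Rightarrow> 'b \<Rightarrow> 'b)
    \<Rightarrow> ('g \<Rightarrow> 'b set \<Rightarrow> 'r::comm_ring_1) \<Rightarrow> ('g \<Rightarrow> 'b set \<Rightarrow> 'r) \<Rightarrow> 'g \<Rightarrow> 'b set \<Rightarrow> 'r" where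
  "cp_mult B I \<phi> a b = (\<lambda>k p. \<Sum>g\<in>{g. a g \<noteq> (\<lambda>_. 0)}.
       alpha B I \<phi> g (\<lambda>q. alpha B I \<phi> (- g) (a g) q * b (- g + k) q) p)"

text \<open>U \<delta>_g := 1_U \<delta>_g.\<close>
definition delta :: "'b::boolean_algebra set \<Rightarrow> 'b \<Rightarrow> 'g \<Rightarrow> 'g \<Rightarrow> 'b set \<Rightarrow> 'r::comm_ring_1" where
  "delta B U g = (\<lambda>h p. if h = g then ind B U p else 0)"

text \<open>R-span of {U \<delta>_g : U \<in> J g} inside the crossed product (this is A_1 inside A_2).\<close>
definition cp_span :: "'b::boolean_algebra set \<Rightarrow> ('g \<Rightarrow> 'b set)
    \<Rightarrow> ('g \<Rightarrow> 'b set \<Rightarrow> 'r::comm_ring_1) set" where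
  "cp_span B J = {a. \<exists>S c. finite S \<and> S \<subseteq> {(U, g). U \<in> J g} \<and>
       a = (\<lambda>h p. \<Sum>(U, g)\<in>S. c (U, g) * delta B U g h p)}"

definition cp_ideal :: "'b::boolean_algebra set \<Rightarrow> ('g::group_add \<Rightarrow> 'b set) \<Rightarrow> ('g \<Rightarrow> 'b \<Rightarrow> 'b)
    \<Rightarrow> ('g \<Rightarrow> 'b set \<Rightarrow> 'r::comm_ring_1) set \<Rightarrow> bool" where
  "cp_ideal B I \<phi> J \<longleftrightarrow> J \<subseteq> cp B I \<and> cp_zero \<in> J \<and>
     (\<forall>x\<in>J. \<forall>y\<in>J. cp_add x y \<in> J) \<and> (\<forall>r. \<forall>x\<in>J. cp_smult r x \<in> J) \<and>
     (\<forall>a\<in>cp B I. \<forall>x\<in>J. cp_mult B I \<phi> a x \<in> J \<and> cp_mult B I \<phi> x a \<in> J)"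

definition cp_lmod :: "'b::boolean_algebra set \<Rightarrow> ('g::group_add \<Rightarrow> 'b set) \<Rightarrow> ('g \<Rightarrow> 'b \<Rightarrow> 'b)
    \<Rightarrow> ('g \<Rightarrow> 'b set \<Rightarrow> 'r::comm_ring_1) \<Rightarrow> ('g \<Rightarrow> 'b set \<Rightarrow> 'r) set" where
  "cp_lmod B I \<phi> x = {cp_mult B I \<phi> a x | a. a \<in> cp B I}"

definition dsum :: "'i set \<Rightarrow> ('i \<Rightarrow> ('g \<Rightarrow> 'b set \<Rightarrow> 'r::comm_ring_1) set)
    \<Rightarrow> ('i \<Rightarrow> 'g \<Rightarrow> 'b set \<Rightarrow> 'r) set" where
  "dsum Idx M = {x. (\<forall>i\<in>Idx. x i \<in> M i) \<and> (\<forall>i. i \<notin> Idx \<longrightarrow> x i = cp_zero) \<and>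
       finite {i. x i \<noteq> cp_zero}}"

definition surj_lmod_hom :: "'b::boolean_algebra set \<Rightarrow> ('g::group_add \<Rightarrow> 'b set) \<Rightarrow> ('g \<Rightarrow> 'b \<Rightarrow> 'b)
    \<Rightarrow> ('i \<Rightarrow> 'g \<Rightarrow> 'b set \<Rightarrow> 'r::comm_ring_1) set \<Rightarrow> ('g \<Rightarrow> 'b set \<Rightarrow> 'r) set
    \<Rightarrow> (('i \<Rightarrow> 'g \<Rightarrow> 'b set \<Rightarrow> 'r) \<Rightarrow> 'g \<Rightarrow> 'b set \<Rightarrow> 'r) \<Rightarrow> bool" where
  "surj_lmod_hom B I \<phi> D N F \<longleftrightarrow>
     (\<forall>x\<in>D. \<forall>y\<in>D. F (\<lambda>i. cp_add (x i) (y i)) = cp_add (F x) (F y)) \<and>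
     (\<forall>a\<in>cp B I. \<forall>x\<in>D. F (\<lambda>i. cp_mult B I \<phi> a (x i)) = cp_mult B I \<phi> a (F x)) \<and>
     F ` D = N"

end

theory Submission
  imports Defs "HOL-Library.Function_Algebras"
begin

text \<open>
  Write A for the partial skew group ring of the larger action and u = U\<delta>_e.
  For V in I1 g the element V\<delta>_g of A1 equals (V\<delta>_e)(V\<delta>_e)(V\<delta>_g), so the
  two-sided ideal of A generated by the idempotents V\<delta>_e, V in B1, contains A1 and hence
  is all of A. Thus u = \<Sum>_i a_i (U_i\<delta>_e) b_i with U_i in B1, and
  (y_i)_i \<mapsto> \<Sum>_i y_i b_i u is a homomorphism of left A-modules from
  \<Oplus>_i A(U_i\<delta>_e) to Au. It is onto because u is idempotent:
  c u = c u u = \<Sum>_i (c a_i U_i\<delta>_e) b_i u.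
\<close>

section \<open>Partial actions on generalized Boolean algebras\<close>

locale gba_partial_action =
  fixes B :: "'b::boolean_algebra set" and I :: "'g::group_add \<Rightarrow> 'b set"
    and \<phi> :: "'g \<Rightarrow> 'b \<Rightarrow> 'b"
  assumes is_partial_action: "partial_action B I \<phi>"
begin

lemma inf_in_B: "x \<in> B \<Longrightarrow> y \<in> B \<Longrightarrow> inf x y \<in> B"
  using is_partial_action by (simp add: partial_action_def gba_def)

lemma I_subset: "I t \<subseteq> B"
  using is_partial_action by (simp add: partial_action_def gba_ideal_def)

lemma I_mem_B: "x \<in> I t \<Longrightarrow> x \<in> B"
  using I_subset by blast

lemma bot_in_I: "bot \<in> I t"
  using is_partial_action by (simp add: partial_action_def gba_ideal_def)

lemma inf_in_I: "x \<in> I t \<Longrightarrow> y \<in> B \<Longrightarrow> inf x y \<in> I t"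
  using is_partial_action by (simp add: partial_action_def gba_ideal_def)

lemma inf_in_I': "x \<in> B \<Longrightarrow> y \<in> I t \<Longrightarrow> inf x y \<in> I t"
  by (metis inf_in_I inf_commute)

lemma I_zero: "I 0 = B"
  using is_partial_action by (simp add: partial_action_def)

lemma phi_zero: "x \<in> B \<Longrightarrow> \<phi> 0 x = x"
  using is_partial_action by (simp add: partial_action_def)

lemma phi_iso: "gba_iso (I (- t)) (I t) (\<phi> t)"
  using is_partial_action by (simp add: partial_action_def)

lemma phi_in_I: "x \<in> I (- t) \<Longrightarrow> \<phi> t x \<in> I t"
  using phi_iso[of t] by (auto simp: gba_iso_def bij_betw_def)

lemma phi_inf: "x \<in> I (- t) \<Longrightarrow> y \<in> I (- t) \<Longrightarrow> \<phi> t (inf x y) = inf (\<phi> t x) (\<phi> t y)"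
  using phi_iso[of t] by (auto simp: gba_iso_def)

lemma phi_sup: "x \<in> I (- t) \<Longrightarrow> y \<in> I (- t) \<Longrightarrow> \<phi> t (sup x y) = sup (\<phi> t x) (\<phi> t y)"
  using phi_iso[of t] by (auto simp: gba_iso_def)

lemma phi_comp: "x \<in> I (- t) \<Longrightarrow> \<phi> t x \<in> I (- s) \<Longrightarrow> \<phi> s (\<phi> t x) = \<phi> (s + t) x"
  using is_partial_action by (simp add: partial_action_def)

lemma phi_in_I_add: "x \<in> I (- s) \<Longrightarrow> x \<in> I t \<Longrightarrow> \<phi> s x \<in> I (s + t)"
  using is_partial_action unfolding partial_action_def by blast

lemma phi_in_I_neg: "x \<in> I t \<Longrightarrow> \<phi> (- t) x \<in> I (- t)"
  using phi_in_I[of x "- t"] by simp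

lemma phi_neg_phi: "x \<in> I (- t) \<Longrightarrow> \<phi> (- t) (\<phi> t x) = x"
  using phi_comp[of x t "- t"] phi_in_I[of x t] phi_zero I_mem_B by simp

lemma phi_phi_neg: "x \<in> I t \<Longrightarrow> \<phi> t (\<phi> (- t) x) = x"
  using phi_neg_phi[of x "- t"] by simp

lemma phi_mono: "x \<in> I (- t) \<Longrightarrow> y \<in> I (- t) \<Longrightarrow> x \<le> y \<Longrightarrow> \<phi> t x \<le> \<phi> t y"
  by (metis inf.absorb_iff1 phi_inf)

lemma phi_bot: "\<phi> t bot = bot"
proof -
  have "\<phi> t bot \<le> \<phi> t (\<phi> (- t) bot)"
    using phi_mono[of bot t "\<phi> (- t) bot"] bot_in_I phi_in_I_neg by simp
  thus ?thesis using phi_phi_neg bot_in_I by (simp add: bot_unique)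
qed

lemma phi_inf_neg_in_I_add:
  assumes "U \<in> I g" and "V \<in> I h"
  shows "\<phi> g (inf (\<phi> (- g) U) V) \<in> I (g + h)"
  using phi_in_I_add inf_in_I inf_in_I' phi_in_I_neg I_mem_B assms by metis

text \<open>The two bracketings of (U\<delta>_g)(V\<delta>_h)(W\<delta>_k), computed with
  delta_mult_delta below, have these coefficients.\<close>

lemma phi_inf_neg_assoc:
  assumes U: "U \<in> I g" and V: "V \<in> I h" and W: "W \<in> I k"
  shows "\<phi> (g + h) (inf (\<phi> (- (g + h)) (\<phi> g (inf (\<phi> (- g) U) V))) W)
       = \<phi> g (inf (\<phi> (- g) U) (\<phi> h (inf (\<phi> (- h) V) W)))"
proof -
  define X where "X = inf (\<phi> (- g) U) V"
  define Y where "Y = inf (\<phi> (- h) V) W"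
  define Y' where "Y' = inf (\<phi> (- h) X) W"
  have VW_B: "V \<in> B" "W \<in> B" using V W I_mem_B by auto
  have X_I: "X \<in> I (- g)" "X \<in> I h" "X \<le> V"
    unfolding X_def using inf_in_I inf_in_I' phi_in_I_neg[OF U] V I_mem_B by auto
  have "\<phi> (- (g + h)) (\<phi> g X) = \<phi> (- (g + h) + g) X"
    using phi_comp[OF X_I(1), of "- (g + h)"] phi_in_I_add[OF X_I(1,2)] by simp
  also have "- (g + h) + g = - h" by (simp add: minus_add add.assoc)
  finally have L: "\<phi> (- (g + h)) (\<phi> g X) = \<phi> (- h) X" .
  have Y_I: "Y \<in> I (- h)" unfolding Y_def using inf_in_I phi_in_I_neg[OF V] VW_B by blast
  have hY: "\<phi> h Y \<le> V"
    using phi_mono[OF Y_I phi_in_I_neg[OF V]] phi_phi_neg[OF V] by (simp add: Y_def)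
  have hX_I: "\<phi> (- h) X \<in> I (- h)" using phi_in_I_neg[OF X_I(2)] .
  have Y'_I: "Y' \<in> I (- h)" unfolding Y'_def using inf_in_I hX_I VW_B by blast
  have "\<phi> (- h) X \<le> \<phi> (- h) V"
    using phi_mono[of X "- h" V] X_I V by simp
  hence "Y' = inf (\<phi> (- h) X) Y" unfolding Y'_def Y_def
    by (metis inf.absorb1 inf.assoc)
  hence hY': "\<phi> h Y' = inf X (\<phi> h Y)"
    using phi_inf[OF hX_I Y_I] phi_phi_neg[OF X_I(2)] by simp
  have "inf (\<phi> (- g) U) (\<phi> h Y) = inf X (\<phi> h Y)"
    unfolding X_def using hY by (metis inf.absorb2 inf.assoc inf.commute)
  moreover have "\<phi> g (\<phi> h Y') = \<phi> (g + h) Y'"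
    using phi_comp[OF Y'_I] hY' inf_in_I X_I(1) phi_in_I[OF Y_I] I_mem_B by metis
  ultimately show ?thesis
    unfolding L X_def[symmetric] Y_def[symmetric] using hY' Y'_def by simp
qed

section \<open>The induced partial action on the Stone space\<close>

lemma theta_prime:
  assumes q: "q \<in> stone B" and xy: "x \<in> B" "y \<in> B" "sup x y \<in> theta B I \<phi> h q"
  shows "x \<in> theta B I \<phi> h q \<or> y \<in> theta B I \<phi> h q"
proof -
  obtain W where W: "W \<in> q" "W \<in> I (- h)" "\<phi> h W \<le> sup x y"
    using xy(3) by (auto simp: theta_def)
  define x' where "x' = inf (\<phi> h W) x"
  define y' where "y' = inf (\<phi> h W) y"
  have x'y'_I: "x' \<in> I h" "y' \<in> I h"
    unfolding x'_def y'_def using inf_in_I phi_in_I W xy by auto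
  have "\<phi> h W = sup x' y'"
    using W(3) unfolding x'_def y'_def by (metis inf.absorb1 inf_sup_distrib1)
  hence "W = sup (\<phi> (- h) x') (\<phi> (- h) y')"
    using phi_neg_phi[OF W(2)] phi_sup[of x' "- h" y'] x'y'_I by simp
  moreover have "\<phi> (- h) x' \<in> B" "\<phi> (- h) y' \<in> B"
    using I_mem_B phi_in_I_neg x'y'_I by auto
  ultimately have "\<phi> (- h) x' \<in> q \<or> \<phi> (- h) y' \<in> q"
    using q W(1) unfolding stone_def by blast
  moreover have "\<phi> h (\<phi> (- h) x') \<le> x" "\<phi> h (\<phi> (- h) y') \<le> y"
    using phi_phi_neg x'y'_I unfolding x'_def y'_def by simp_all
  ultimately show ?thesis
    using phi_in_I_neg[OF x'y'_I(1)] phi_in_I_neg[OF x'y'_I(2)] xy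
    unfolding theta_def by blast
qed

lemma theta_stone:
  assumes q: "q \<in> stone B" and W0: "W0 \<in> q" "W0 \<in> I (- h)"
  shows "theta B I \<phi> h q \<in> stone B"
proof -
  let ?T = "theta B I \<phi> h q"
  have "\<phi> h W0 \<in> ?T"
    using W0 phi_in_I I_mem_B by (auto simp: theta_def)
  hence nonempty: "?T \<noteq> {}" by blast
  have proper: "bot \<notin> ?T"
  proof
    assume "bot \<in> ?T"
    then obtain W where W: "W \<in> q" "W \<in> I (- h)" "\<phi> h W \<le> bot"
      by (auto simp: theta_def)
    hence "W = bot"
      using phi_neg_phi[OF W(2)] phi_bot by (simp add: bot_unique)
    thus False using W q by (simp add: stone_def)
  qed
  have inf_closed: "inf x y \<in> ?T" if x: "x \<in> ?T" and y: "y \<in> ?T" for x y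
  proof -
    obtain W1 where W1: "W1 \<in> q" "W1 \<in> I (- h)" "\<phi> h W1 \<le> x" "x \<in> B"
      using x by (auto simp: theta_def)
    obtain W2 where W2: "W2 \<in> q" "W2 \<in> I (- h)" "\<phi> h W2 \<le> y" "y \<in> B"
      using y by (auto simp: theta_def)
    note W = W1 W2
    have "inf W1 W2 \<in> q" using q W by (simp add: stone_def)
    moreover have "inf W1 W2 \<in> I (- h)" using inf_in_I W I_mem_B by blast
    moreover have "\<phi> h (inf W1 W2) \<le> inf x y"
      using phi_inf W by (simp add: le_infI1 le_infI2)
    ultimately show ?thesis using inf_in_B W by (auto simp: theta_def)
  qed
  have "\<forall>x\<in>?T. \<forall>y\<in>B. x \<le> y \<longrightarrow> y \<in> ?T"
    by (auto simp: theta_def intro: order_trans)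
  thus ?thesis
    using nonempty proper inf_closed theta_prime[OF q]
    unfolding stone_def by (auto simp: theta_def)
qed

lemma alpha_ind:
  assumes X: "X \<in> I (- g)"
  shows "alpha B I \<phi> g (ind B X) q = (ind B (\<phi> g X) q :: 'r::comm_ring_1)"
proof (cases "q \<in> stone B \<and> q \<inter> I g \<noteq> {}")
  case True
  hence q: "q \<in> stone B" and qI: "q \<inter> I g \<noteq> {}" by blast+
  show ?thesis
  proof (cases "\<phi> g X \<in> q")
    case True
    have "X \<in> theta B I \<phi> (- g) q"
      using True phi_in_I[OF X] phi_neg_phi[OF X] I_mem_B[OF X] unfolding theta_def
      by (simp add: bexI[of _ "\<phi> g X"])
    moreover have "theta B I \<phi> (- g) q \<in> stone B"
      using theta_stone[OF q True] phi_in_I[OF X] by simp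
    ultimately show ?thesis
      using True q qI by (simp add: alpha_def ind_def)
  next
    case False
    have "X \<notin> theta B I \<phi> (- g) q"
    proof
      assume "X \<in> theta B I \<phi> (- g) q"
      then obtain W where W: "W \<in> q" "W \<in> I g" "\<phi> (- g) W \<le> X"
        by (auto simp: theta_def)
      have "W \<le> \<phi> g X"
        using phi_mono[OF phi_in_I_neg[OF W(2)] X W(3)] phi_phi_neg[OF W(2)] by simp
      thus False
        using q W False I_mem_B[OF phi_in_I[OF X]] unfolding stone_def by blast
    qed
    thus ?thesis
      using False qI by (simp add: alpha_def ind_def)
  qed
next
  case False
  thus ?thesis using phi_in_I[OF X] by (auto simp: alpha_def ind_def)
qed

lemma ind_inf:
  assumes "X \<in> B" "Y \<in> B"
  shows "ind B X q * ind B Y q = (ind B (inf X Y) q :: 'r::comm_ring_1)"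
proof (cases "q \<in> stone B")
  case True
  hence "X \<in> q \<and> Y \<in> q \<longleftrightarrow> inf X Y \<in> q"
    using assms unfolding stone_def by auto
  thus ?thesis by (auto simp: ind_def)
qed (simp add: ind_def)

end

section \<open>The partial skew group ring\<close>

lemma sum_fun_apply: "(sum f A) x = (\<Sum>i\<in>A. f i x)"
  by (induction A rule: infinite_finite_induct) auto

lemma sum_closed:
  assumes "P 0" "\<And>x y. P x \<Longrightarrow> P y \<Longrightarrow> P (x + y)" "\<And>i. i \<in> A \<Longrightarrow> P (f i)"
  shows "P (sum f A)"
  using assms(3) by (induction A rule: infinite_finite_induct) (simp_all add: assms(1,2))

lemma cp_add_eq: "cp_add a b = a + b"
  by (simp add: cp_add_def plus_fun_def)

lemma cp_zero_eq: "cp_zero = 0"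
  by (simp add: cp_zero_def zero_fun_def)

text \<open>cp_mult sums over the support of its left factor, and that sum is the junk value 0
  when the support is infinite; linearity in the left factor therefore needs finite support.\<close>

definition cp_finsupp :: "('g \<Rightarrow> 'b set \<Rightarrow> 'r::comm_ring_1) \<Rightarrow> bool" where
  "cp_finsupp a \<longleftrightarrow> finite {g. a g \<noteq> (\<lambda>_. 0)}"

lemma alpha_zero: "alpha B I \<phi> g (\<lambda>_. 0) p = 0"
  by (simp add: alpha_def)

lemma alpha_add: "alpha B I \<phi> g (\<lambda>q. f q + h q) p = alpha B I \<phi> g f p + alpha B I \<phi> g h p"
  by (simp add: alpha_def)

lemma alpha_smult: "alpha B I \<phi> g (\<lambda>q. r * f q) p = r * alpha B I \<phi> g f p"
  by (simp add: alpha_def)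

lemma cp_mult_eq_sum_over:
  assumes "finite S" "{g. a g \<noteq> (\<lambda>_. 0)} \<subseteq> S"
  shows "cp_mult B I \<phi> a b =
    (\<lambda>k p. \<Sum>g\<in>S. alpha B I \<phi> g (\<lambda>q. alpha B I \<phi> (- g) (a g) q * b (- g + k) q) p)"
  unfolding cp_mult_def
  by (intro ext sum.mono_neutral_left[OF assms]) (auto simp: alpha_def)

lemma cp_mult_zero_left: "cp_mult B I \<phi> 0 b = 0"
  by (simp add: cp_mult_def zero_fun_def)

lemma cp_mult_zero_right: "cp_mult B I \<phi> a 0 = 0"
  by (simp add: cp_mult_def zero_fun_def alpha_def)

lemma cp_mult_add_right: "cp_mult B I \<phi> a (b + c) = cp_mult B I \<phi> a b + cp_mult B I \<phi> a c"
  by (simp add: cp_mult_def plus_fun_def distrib_left alpha_add sum.distrib)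

lemma cp_mult_smult_right:
  "cp_mult B I \<phi> a (cp_smult r b) = cp_smult r (cp_mult B I \<phi> a b)"
  by (simp add: cp_mult_def cp_smult_def alpha_smult sum_distrib_left mult.left_commute)

lemma cp_mult_add_left:
  assumes "cp_finsupp a" "cp_finsupp b"
  shows "cp_mult B I \<phi> (a + b) c = cp_mult B I \<phi> a c + cp_mult B I \<phi> b c"
proof -
  let ?S = "{g. a g \<noteq> (\<lambda>_. 0)} \<union> {g. b g \<noteq> (\<lambda>_. 0)}"
  have "finite ?S" using assms by (simp add: cp_finsupp_def)
  moreover have "{g. (a + b) g \<noteq> (\<lambda>_. 0)} \<subseteq> ?S" by (auto simp: plus_fun_def)
  ultimately show ?thesis
    by (simp add: cp_mult_eq_sum_over[of ?S] plus_fun_def distrib_right alpha_add sum.distrib)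
qed

lemma cp_mult_smult_left:
  assumes "cp_finsupp a"
  shows "cp_mult B I \<phi> (cp_smult r a) c = cp_smult r (cp_mult B I \<phi> a c)"
proof -
  let ?S = "{g. a g \<noteq> (\<lambda>_. 0)}"
  have "finite ?S" using assms by (simp add: cp_finsupp_def)
  moreover have "{g. cp_smult r a g \<noteq> (\<lambda>_. 0)} \<subseteq> ?S" by (auto simp: cp_smult_def)
  ultimately show ?thesis
    by (simp add: cp_mult_eq_sum_over[of ?S] cp_smult_def alpha_smult mult.assoc sum_distrib_left)
qed

lemma cp_mult_sum_right: "cp_mult B I \<phi> a (sum f A) = (\<Sum>j\<in>A. cp_mult B I \<phi> a (f j))"
proof (induction A rule: infinite_finite_induct)
  case (insert x F)
  thus ?case by (simp only: sum.insert[OF insert.hyps] cp_mult_add_right)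
next
  case (infinite A)
  show ?case unfolding sum.infinite[OF infinite] by (rule cp_mult_zero_right)
qed (simp only: sum.empty cp_mult_zero_right)

lemma cp_mult_sum_list_right:
  "cp_mult B I \<phi> a (sum_list xs) = (\<Sum>x\<leftarrow>xs. cp_mult B I \<phi> a x)"
  by (induction xs) (simp_all only: sum_list.Nil sum_list.Cons list.map cp_mult_zero_right
      cp_mult_add_right)

lemma cp_smult_add: "cp_smult r (a + b) = cp_smult r a + cp_smult r b"
  by (simp add: cp_smult_def plus_fun_def distrib_left)

lemma cp_smult_zero: "cp_smult r 0 = 0"
  by (simp add: cp_smult_def zero_fun_def)

lemma cp_smult_sum_list: "cp_smult r (sum_list xs) = (\<Sum>x\<leftarrow>xs. cp_smult r x)"
  by (induction xs) (simp_all only: sum_list.Nil sum_list.Cons list.map cp_smult_zero cp_smult_add)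

lemma cp_finsupp_add: "cp_finsupp a \<Longrightarrow> cp_finsupp b \<Longrightarrow> cp_finsupp (a + b)"
  unfolding cp_finsupp_def
  by (rule finite_subset[OF _ finite_UnI, of _ "{g. a g \<noteq> (\<lambda>_. 0)}" "{g. b g \<noteq> (\<lambda>_. 0)}"])
    (auto simp: plus_fun_def)

lemma cp_finsupp_smult: "cp_finsupp a \<Longrightarrow> cp_finsupp (cp_smult r a)"
  unfolding cp_finsupp_def
  by (rule finite_subset[of _ "{g. a g \<noteq> (\<lambda>_. 0)}"]) (auto simp: cp_smult_def)

lemma cp_finsupp_delta: "cp_finsupp (delta B U g)"
  unfolding cp_finsupp_def by (rule finite_subset[of _ "{g}"]) (auto simp: delta_def)

lemma cp_finsupp_mult:
  assumes "cp_finsupp a" "cp_finsupp b"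
  shows "cp_finsupp (cp_mult B I \<phi> a b)"
proof -
  let ?A = "{g. a g \<noteq> (\<lambda>_. 0)}" and ?B = "{g. b g \<noteq> (\<lambda>_. 0)}"
  have "{k. cp_mult B I \<phi> a b k \<noteq> (\<lambda>_. 0)} \<subseteq> (\<lambda>(g, h). g + h) ` (?A \<times> ?B)"
  proof
    fix k assume "k \<in> {k. cp_mult B I \<phi> a b k \<noteq> (\<lambda>_. 0)}"
    then obtain p where "cp_mult B I \<phi> a b k p \<noteq> 0" by auto
    then obtain g where g: "g \<in> ?A"
      "alpha B I \<phi> g (\<lambda>q. alpha B I \<phi> (- g) (a g) q * b (- g + k) q) p \<noteq> 0"
      unfolding cp_mult_def by (meson sum.not_neutral_contains_not_neutral)
    moreover have "b (- g + k) \<noteq> (\<lambda>_. 0)"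
    proof
      assume "b (- g + k) = (\<lambda>_. 0)"
      thus False using g(2) by (simp add: alpha_def)
    qed
    ultimately have "(g, - g + k) \<in> ?A \<times> ?B" by simp
    moreover have "k = g + (- g + k)" by (simp add: add.assoc[symmetric])
    ultimately show "k \<in> (\<lambda>(g, h). g + h) ` (?A \<times> ?B)" by force
  qed
  moreover have "finite ((\<lambda>(g, h). g + h) ` (?A \<times> ?B))"
    using assms by (simp add: cp_finsupp_def)
  ultimately show ?thesis unfolding cp_finsupp_def by (rule finite_subset)
qed

lemma cp_finsuppI: "a \<in> cp B I \<Longrightarrow> cp_finsupp a"
  by (simp add: cp_def cp_finsupp_def)

lemma lc_zero: "(\<lambda>_. 0) \<in> lc B J"
  unfolding lc_def by (auto intro!: exI[of _ "{}"])

lemma lc_add: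
  assumes "f \<in> lc B J" "h \<in> lc B J"
  shows "(\<lambda>p. f p + h p) \<in> lc B J"
proof -
  obtain S1 c1 where 1: "finite S1" "S1 \<subseteq> J" "f = (\<lambda>p. \<Sum>U\<in>S1. c1 U * ind B U p)"
    using assms(1) unfolding lc_def by blast
  obtain S2 c2 where 2: "finite S2" "S2 \<subseteq> J" "h = (\<lambda>p. \<Sum>U\<in>S2. c2 U * ind B U p)"
    using assms(2) unfolding lc_def by blast
  define c where "c U = (if U \<in> S1 then c1 U else 0) + (if U \<in> S2 then c2 U else 0)" for U
  have "f p + h p = (\<Sum>U\<in>S1 \<union> S2. c U * ind B U p)" for p
  proof -
    have "f p = (\<Sum>U\<in>S1 \<union> S2. (if U \<in> S1 then c1 U else 0) * ind B U p)"
      unfolding 1(3) by (rule sum.mono_neutral_cong_left) (use 1 2 in auto)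
    moreover have "h p = (\<Sum>U\<in>S1 \<union> S2. (if U \<in> S2 then c2 U else 0) * ind B U p)"
      unfolding 2(3) by (rule sum.mono_neutral_cong_left) (use 1 2 in auto)
    ultimately show ?thesis by (simp add: c_def distrib_right sum.distrib)
  qed
  thus ?thesis unfolding lc_def using 1 2 by (intro CollectI exI[of _ "S1 \<union> S2"] exI[of _ c]) auto
qed

lemma lc_smult:
  assumes "f \<in> lc B J"
  shows "(\<lambda>p. r * f p) \<in> lc B J"
proof -
  obtain S c where S: "finite S" "S \<subseteq> J" "f = (\<lambda>p. \<Sum>U\<in>S. c U * ind B U p)"
    using assms unfolding lc_def by blast
  have "(\<lambda>p. r * f p) = (\<lambda>p. \<Sum>U\<in>S. (r * c U) * ind B U p)"
    unfolding S(3) by (simp add: sum_distrib_left mult.assoc)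
  thus ?thesis unfolding lc_def using S by (intro CollectI exI[of _ S] exI[of _ "\<lambda>U. r * c U"]) auto
qed

lemma lc_ind: "U \<in> J \<Longrightarrow> ind B U \<in> lc B J"
  unfolding lc_def by (intro CollectI exI[of _ "{U}"] exI[of _ "\<lambda>_. 1"]) auto

lemma zero_in_cp: "0 \<in> cp B I"
  by (simp add: cp_def zero_fun_def lc_zero)

lemma add_in_cp: "a \<in> cp B I \<Longrightarrow> b \<in> cp B I \<Longrightarrow> a + b \<in> cp B I"
  using cp_finsupp_add[of a b] by (simp add: cp_def cp_finsupp_def plus_fun_def lc_add)

lemma smult_in_cp: "a \<in> cp B I \<Longrightarrow> cp_smult r a \<in> cp B I"
  using cp_finsupp_smult[of a r] by (simp add: cp_def cp_finsupp_def cp_smult_def lc_smult)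

lemma sum_in_cp: "(\<And>j. j \<in> A \<Longrightarrow> f j \<in> cp B I) \<Longrightarrow> sum f A \<in> cp B I"
  by (induction A rule: infinite_finite_induct) (simp_all add: zero_in_cp add_in_cp)

lemma sum_list_in_cp: "set xs \<subseteq> cp B I \<Longrightarrow> sum_list xs \<in> cp B I"
  by (induction xs) (simp_all add: zero_in_cp add_in_cp)

lemma delta_in_cp:
  assumes "U \<in> I g"
  shows "delta B U g \<in> cp B I"
proof -
  have "delta B U g h \<in> lc B (I h)" for h
    by (cases "h = g") (simp_all add: delta_def lc_ind assms lc_zero)
  thus ?thesis using cp_finsupp_delta[of B U g] unfolding cp_def cp_finsupp_def by blast
qed

lemma cp_mult_sum_left:
  "(\<And>j. j \<in> A \<Longrightarrow> f j \<in> cp B I) \<Longrightarrow>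
    cp_mult B I \<phi> (sum f A) b = (\<Sum>j\<in>A. cp_mult B I \<phi> (f j) b)"
proof (induction A rule: infinite_finite_induct)
  case (insert x F)
  have "sum f F \<in> cp B I" using insert.prems by (intro sum_in_cp) auto
  hence "cp_mult B I \<phi> (f x + sum f F) b = cp_mult B I \<phi> (f x) b + cp_mult B I \<phi> (sum f F) b"
    using insert.prems by (intro cp_mult_add_left cp_finsuppI) auto
  thus ?case using insert by (simp only: sum.insert[OF insert.hyps]) simp
next
  case (infinite A)
  show ?case unfolding sum.infinite[OF infinite.hyps] by (rule cp_mult_zero_left)
qed (simp only: sum.empty cp_mult_zero_left)

lemma cp_mult_sum_list_left:
  "set xs \<subseteq> cp B I \<Longrightarrow> cp_mult B I \<phi> (sum_list xs) b = (\<Sum>x\<leftarrow>xs. cp_mult B I \<phi> x b)"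
proof (induction xs)
  case (Cons x xs)
  hence x: "x \<in> cp B I" and xs: "set xs \<subseteq> cp B I" by auto
  have "cp_mult B I \<phi> (x + sum_list xs) b = cp_mult B I \<phi> x b + cp_mult B I \<phi> (sum_list xs) b"
    using cp_mult_add_left[OF cp_finsuppI[OF x] cp_finsuppI[OF sum_list_in_cp[OF xs]]] .
  thus ?case using Cons.IH[OF xs] by (simp only: sum_list.Cons list.map)
qed (simp only: sum_list.Nil list.map cp_mult_zero_left)

context gba_partial_action
begin

abbreviation cp_times (infixl \<open>\<star>\<close> 70) where "a \<star> b \<equiv> cp_mult B I \<phi> a b"

lemma delta_mult_delta:
  assumes U: "U \<in> I g" and V: "V \<in> B"
  shows "delta B U g \<star> delta B V h
    = (delta B (\<phi> g (inf (\<phi> (- g) U) V)) (g + h) :: 'g \<Rightarrow> 'b set \<Rightarrow> 'r::comm_ring_1)"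
proof (intro ext)
  fix k p
  define X where "X = inf (\<phi> (- g) U) V"
  have X: "X \<in> I (- g)" unfolding X_def using inf_in_I phi_in_I_neg[OF U] V by blast
  have "(delta B U g \<star> delta B V h) k p
      = (alpha B I \<phi> g (\<lambda>q. alpha B I \<phi> (- g) (delta B U g g) q * delta B V h (- g + k) q) p
          :: 'r)"
    by (subst cp_mult_eq_sum_over[of "{g}"]) (auto simp: delta_def)
  also have "(\<lambda>q. alpha B I \<phi> (- g) (delta B U g g) q * delta B V h (- g + k) q)
      = (if k = g + h then ind B X else (\<lambda>_. 0 :: 'r))"
  proof -
    have k: "- g + k = h \<longleftrightarrow> k = g + h"
      by (metis add.assoc add.right_inverse add_0 add_minus_cancel)
    have "alpha B I \<phi> (- g) (ind B U) = (ind B (\<phi> (- g) U) :: 'b set \<Rightarrow> 'r)"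
      using U by (intro ext alpha_ind) simp
    thus ?thesis
      by (simp add: delta_def X_def fun_eq_iff k ind_inf[OF I_mem_B[OF phi_in_I_neg[OF U]] V])
  qed
  also have "alpha B I \<phi> g (if k = g + h then ind B X else (\<lambda>_. 0)) p
      = delta B (\<phi> g X) (g + h) k p"
    by (cases "k = g + h") (simp_all add: delta_def alpha_ind[OF X] alpha_zero)
  finally show "(delta B U g \<star> delta B V h) k p = (delta B (\<phi> g X) (g + h) k p :: 'r)" .
qed

lemma cp_induct [consumes 1, case_names zero add gen]:
  assumes a: "a \<in> cp B I" and zero: "P 0"
    and add: "\<And>x y. x \<in> cp B I \<Longrightarrow> y \<in> cp B I \<Longrightarrow> P x \<Longrightarrow> P y \<Longrightarrow> P (x + y)"
    and gen: "\<And>r U g. U \<in> I g \<Longrightarrow> P (cp_smult r (delta B U g))"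
  shows "P a"
proof -
  let ?G = "{g. a g \<noteq> (\<lambda>_. 0)}"
  have fin: "finite ?G" and lc: "\<forall>g. a g \<in> lc B (I g)" using a by (auto simp: cp_def)
  hence "\<forall>g. \<exists>S c. finite S \<and> S \<subseteq> I g \<and> a g = (\<lambda>p. \<Sum>U\<in>S. c U * ind B U p)"
    by (auto simp: lc_def)
  then obtain S c where S: "\<And>g. finite (S g) \<and> S g \<subseteq> I g \<and> a g = (\<lambda>p. \<Sum>U\<in>S g. c g U * ind B U p)"
    by metis
  let ?a = "\<Sum>g\<in>?G. \<Sum>U\<in>S g. cp_smult (c g U) (delta B U g)"
  have "a = ?a"
  proof (intro ext)
    fix h p
    have "(\<Sum>U\<in>S g. cp_smult (c g U) (delta B U g) h p) = (if h = g then a g p else 0)" for g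
      using S[of g] by (cases "h = g") (simp_all add: sum_fun_apply cp_smult_def delta_def)
    hence "?a h p = (\<Sum>g\<in>?G. if h = g then a g p else 0)"
      by (simp add: sum_fun_apply del: sum.delta)
    also have "\<dots> = a h p" by (simp add: fin)
    finally show "a h p = ?a h p" ..
  qed
  moreover let ?Q = "\<lambda>x. x \<in> cp B I \<and> P x"
  have "?Q ?a"
  proof (intro sum_closed[where P = ?Q])
    fix g U assume "U \<in> S g"
    hence "U \<in> I g" using S by blast
    thus "?Q (cp_smult (c g U) (delta B U g))" using gen smult_in_cp delta_in_cp by blast
  qed (use zero zero_in_cp add add_in_cp in auto)
  ultimately show ?thesis by simp
qed

lemma delta_mult_in_cp:
  assumes U: "U \<in> I g" and b: "b \<in> cp B I"
  shows "delta B U g \<star> b \<in> cp B I"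
  using b
proof (induction rule: cp_induct)
  case (gen r V h)
  thus ?case
    by (simp add: cp_mult_smult_right delta_mult_delta[OF U I_mem_B[OF gen]] smult_in_cp
        delta_in_cp phi_inf_neg_in_I_add[OF U gen])
qed (simp_all only: cp_mult_zero_right cp_mult_add_right zero_in_cp add_in_cp)

lemma cp_mult_in_cp:
  assumes "a \<in> cp B I" and b: "b \<in> cp B I"
  shows "a \<star> b \<in> cp B I"
  using assms(1)
proof (induction rule: cp_induct)
  case (add x y)
  thus ?case by (simp only: cp_mult_add_left cp_finsuppI add_in_cp)
next
  case (gen r V h)
  thus ?case by (simp add: cp_mult_smult_left cp_finsupp_delta smult_in_cp delta_mult_in_cp b)
qed (simp only: cp_mult_zero_left zero_in_cp)

lemma cp_mult_assoc_deltas: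
  assumes U: "U \<in> I g" and V: "V \<in> I h" and W: "W \<in> I k"
  shows "delta B U g \<star> delta B V h \<star> delta B W k
       = (delta B U g \<star> (delta B V h \<star> delta B W k) :: 'g \<Rightarrow> 'b set \<Rightarrow> 'r::comm_ring_1)"
proof -
  have VW: "V \<in> B" "W \<in> B" using V W I_mem_B by auto
  have VW_B: "\<phi> h (inf (\<phi> (- h) V) W) \<in> B" using phi_inf_neg_in_I_add[OF V W] I_mem_B by blast
  show ?thesis
    unfolding delta_mult_delta[OF U VW(1)] delta_mult_delta[OF V VW(2)]
      delta_mult_delta[OF phi_inf_neg_in_I_add[OF U V] VW(2)] delta_mult_delta[OF U VW_B]
      phi_inf_neg_assoc[OF U V W] add.assoc ..
qed

lemma cp_mult_assoc_delta_delta: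
  assumes U: "U \<in> I g" and V: "V \<in> I h" and c: "c \<in> cp B I"
  shows "delta B U g \<star> delta B V h \<star> c = delta B U g \<star> (delta B V h \<star> c)"
  using c
  by (induction rule: cp_induct)
    (simp_all only: cp_mult_zero_right cp_mult_add_right cp_mult_smult_right cp_mult_assoc_deltas U V)

lemma cp_mult_assoc_delta:
  assumes U: "U \<in> I g" and b: "b \<in> cp B I" and c: "c \<in> cp B I"
  shows "delta B U g \<star> b \<star> c = delta B U g \<star> (b \<star> c)"
  using b
proof (induction rule: cp_induct)
  case (add x y)
  have "cp_finsupp (delta B U g \<star> x)" "cp_finsupp (delta B U g \<star> y)" "cp_finsupp x" "cp_finsupp y"
    using cp_finsuppI delta_mult_in_cp[OF U] add.hyps by blast+
  thus ?case
    using add.IH by (simp only: cp_mult_add_right cp_mult_add_left)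
next
  case (gen r V h)
  thus ?case
    by (simp add: cp_mult_smult_right cp_mult_smult_left cp_finsupp_mult cp_finsupp_delta
        cp_mult_assoc_delta_delta U c)
qed (simp only: cp_mult_zero_right cp_mult_zero_left)

lemma cp_mult_assoc:
  assumes a: "a \<in> cp B I" and b: "b \<in> cp B I" and c: "c \<in> cp B I"
  shows "a \<star> b \<star> c = a \<star> (b \<star> c)"
  using a
proof (induction rule: cp_induct)
  case (add x y)
  have "cp_finsupp (x \<star> b)" "cp_finsupp (y \<star> b)" "cp_finsupp x" "cp_finsupp y"
    using cp_finsuppI cp_mult_in_cp[OF _ b] add.hyps by blast+
  thus ?case
    using add.IH by (simp only: cp_mult_add_left)
next
  case (gen r V h)
  have "cp_finsupp (delta B V h \<star> b)" using cp_finsuppI delta_mult_in_cp[OF gen b] by blast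
  thus ?case by (simp add: cp_mult_smult_left cp_finsupp_delta cp_mult_assoc_delta gen b c)
qed (simp only: cp_mult_zero_left)

lemma delta_zero_in_cp: "U \<in> B \<Longrightarrow> delta B U 0 \<in> cp B I"
  using delta_in_cp[of U I 0] I_zero by simp

lemma delta_zero_mult_delta:
  assumes "U \<in> I g"
  shows "delta B U 0 \<star> delta B U g = (delta B U g :: 'g \<Rightarrow> 'b set \<Rightarrow> 'r::comm_ring_1)"
  using delta_mult_delta[of U 0 U g] assms I_zero I_mem_B phi_zero by simp

end

section \<open>The ideal generated by a set of elements\<close>

definition cp_ideal_generated :: "'b::boolean_algebra set \<Rightarrow> ('g::group_add \<Rightarrow> 'b set)
    \<Rightarrow> ('g \<Rightarrow> 'b \<Rightarrow> 'b) \<Rightarrow> ('g \<Rightarrow> 'b set \<Rightarrow> 'r::comm_ring_1) set \<Rightarrow> ('g \<Rightarrow> 'b set \<Rightarrow> 'r) set" where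
  "cp_ideal_generated B I \<phi> X =
     {\<Sum>(a, x, b)\<leftarrow>L. cp_mult B I \<phi> (cp_mult B I \<phi> a x) b | L. set L \<subseteq> cp B I \<times> X \<times> cp B I}"

lemma cp_ideal_generated_image_obtain:
  fixes f :: "'v \<Rightarrow> 'g::group_add \<Rightarrow> 'b::boolean_algebra set \<Rightarrow> 'r::comm_ring_1"
  assumes "z \<in> cp_ideal_generated B I \<phi> (f ` S)"
  obtains n and a :: "nat \<Rightarrow> 'g \<Rightarrow> 'b set \<Rightarrow> 'r" and V and b :: "nat \<Rightarrow> 'g \<Rightarrow> 'b set \<Rightarrow> 'r"
  where "\<forall>j<n. a j \<in> cp B I \<and> V j \<in> S \<and> b j \<in> cp B I"
    and "z = (\<Sum>j<n. cp_mult B I \<phi> (cp_mult B I \<phi> (a j) (f (V j))) (b j))"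
proof -
  obtain L where L: "set L \<subseteq> cp B I \<times> f ` S \<times> cp B I"
    and z: "z = (\<Sum>(a, x, b)\<leftarrow>L. cp_mult B I \<phi> (cp_mult B I \<phi> a x) b)"
    using assms unfolding cp_ideal_generated_def by blast
  define V where "V j = inv_into S f (fst (snd (L ! j)))" for j
  have LV: "fst (snd (L ! j)) = f (V j)" "V j \<in> S" if "j < length L" for j
  proof -
    have "fst (snd (L ! j)) \<in> f ` S" using L nth_mem[OF that] by auto
    thus "fst (snd (L ! j)) = f (V j)" "V j \<in> S"
      unfolding V_def by (simp_all add: f_inv_into_f inv_into_into)
  qed
  have "\<forall>j<length L. fst (L ! j) \<in> cp B I \<and> V j \<in> S \<and> snd (snd (L ! j)) \<in> cp B I"
    using L LV(2) nth_mem by fastforce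
  moreover have
    "z = (\<Sum>j<length L. cp_mult B I \<phi> (cp_mult B I \<phi> (fst (L ! j)) (f (V j))) (snd (snd (L ! j))))"
    unfolding z sum_list_sum_nth atLeast0LessThan
    by (intro sum.cong refl) (auto simp: LV(1) case_prod_beta)
  ultimately show thesis by (rule that)
qed

lemma cp_span_subset_cp_ideal:
  fixes J :: "('g::group_add \<Rightarrow> 'b::boolean_algebra set \<Rightarrow> 'r::comm_ring_1) set"
  assumes J: "cp_ideal B I \<phi> J" and delta: "\<And>V g. V \<in> K g \<Longrightarrow> delta B V g \<in> J"
  shows "cp_span B K \<subseteq> J"
proof
  fix z :: "'g \<Rightarrow> 'b set \<Rightarrow> 'r" assume "z \<in> cp_span B K"
  then obtain S c where S: "S \<subseteq> {(U, g). U \<in> K g}"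
    and z: "z = (\<lambda>h p. \<Sum>(U, g)\<in>S. c (U, g) * delta B U g h p)"
    unfolding cp_span_def by blast
  have "z = (\<Sum>s\<in>S. cp_smult (c s) (delta B (fst s) (snd s)))"
    unfolding z by (intro ext) (simp add: sum_fun_apply cp_smult_def case_prod_beta)
  also have "\<dots> \<in> J"
  proof (rule sum_closed[where P = "\<lambda>x. x \<in> J"])
    show "0 \<in> J" using J by (simp add: cp_ideal_def cp_zero_eq)
    show "x + y \<in> J" if "x \<in> J" "y \<in> J" for x y :: "'g \<Rightarrow> 'b set \<Rightarrow> 'r"
      using J that by (simp add: cp_ideal_def cp_add_eq)
    show "cp_smult (c s) (delta B (fst s) (snd s)) \<in> J" if "s \<in> S" for s
    proof -
      have "delta B (fst s) (snd s) \<in> J" using S that by (intro delta) auto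
      thus ?thesis using J by (simp add: cp_ideal_def)
    qed
  qed
  finally show "z \<in> J" .
qed

context gba_partial_action
begin

lemma cp_ideal_generated_subset_cp:
  assumes "X \<subseteq> cp B I"
  shows "cp_ideal_generated B I \<phi> X \<subseteq> cp B I"
  using assms unfolding cp_ideal_generated_def
  by (auto intro!: sum_list_in_cp cp_mult_in_cp; blast)

lemma cp_ideal_generated_mult_left:
  assumes X: "X \<subseteq> cp B I" and c: "c \<in> cp B I" and z: "z \<in> cp_ideal_generated B I \<phi> X"
  shows "c \<star> z \<in> cp_ideal_generated B I \<phi> X"
proof -
  obtain L where L: "set L \<subseteq> cp B I \<times> X \<times> cp B I" and z: "z = (\<Sum>(a, x, b)\<leftarrow>L. a \<star> x \<star> b)"
    using z unfolding cp_ideal_generated_def by blast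
  have "c \<star> (a \<star> x \<star> b) = c \<star> a \<star> x \<star> b" if "(a, x, b) \<in> set L" for a x b
  proof -
    have "a \<in> cp B I" "x \<in> cp B I" "b \<in> cp B I" using that L X by auto
    thus ?thesis using c by (simp add: cp_mult_assoc cp_mult_in_cp)
  qed
  hence "c \<star> z = (\<Sum>(a, x, b)\<leftarrow>map (\<lambda>(a, x, b). (c \<star> a, x, b)) L. a \<star> x \<star> b)"
    unfolding z cp_mult_sum_list_right map_map
    by (intro arg_cong[where f = sum_list] map_cong refl) (auto split: prod.splits)
  moreover have "set (map (\<lambda>(a, x, b). (c \<star> a, x, b)) L) \<subseteq> cp B I \<times> X \<times> cp B I"
    using L c by (auto simp: cp_mult_in_cp)
  ultimately show ?thesis unfolding cp_ideal_generated_def by blast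
qed

lemma cp_ideal_generated_mult_right:
  assumes X: "X \<subseteq> cp B I" and c: "c \<in> cp B I" and z: "z \<in> cp_ideal_generated B I \<phi> X"
  shows "z \<star> c \<in> cp_ideal_generated B I \<phi> X"
proof -
  obtain L where L: "set L \<subseteq> cp B I \<times> X \<times> cp B I" and z: "z = (\<Sum>(a, x, b)\<leftarrow>L. a \<star> x \<star> b)"
    using z unfolding cp_ideal_generated_def by blast
  have "a \<star> x \<star> b \<star> c = a \<star> x \<star> (b \<star> c)" if "(a, x, b) \<in> set L" for a x b
  proof -
    have "a \<in> cp B I" "x \<in> cp B I" "b \<in> cp B I" using that L X by auto
    thus ?thesis using c by (simp add: cp_mult_assoc cp_mult_in_cp)
  qed
  moreover have "set (map (\<lambda>(a, x, b). a \<star> x \<star> b) L) \<subseteq> cp B I"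
    using L X by (auto intro!: cp_mult_in_cp)
  ultimately have "z \<star> c = (\<Sum>(a, x, b)\<leftarrow>map (\<lambda>(a, x, b). (a, x, b \<star> c)) L. a \<star> x \<star> b)"
    unfolding z cp_mult_sum_list_left map_map
    by (subst cp_mult_sum_list_left) (auto split: prod.splits intro!: arg_cong[where f = sum_list])
  moreover have "set (map (\<lambda>(a, x, b). (a, x, b \<star> c)) L) \<subseteq> cp B I \<times> X \<times> cp B I"
    using L c by (auto simp: cp_mult_in_cp)
  ultimately show ?thesis unfolding cp_ideal_generated_def by blast
qed

lemma cp_ideal_generated_smult:
  assumes X: "X \<subseteq> cp B I" and z: "z \<in> cp_ideal_generated B I \<phi> X"
  shows "cp_smult r z \<in> cp_ideal_generated B I \<phi> X"
proof -
  obtain L where L: "set L \<subseteq> cp B I \<times> X \<times> cp B I" and z: "z = (\<Sum>(a, x, b)\<leftarrow>L. a \<star> x \<star> b)"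
    using z unfolding cp_ideal_generated_def by blast
  have "cp_smult r (a \<star> x \<star> b) = cp_smult r a \<star> x \<star> b" if "(a, x, b) \<in> set L" for a x b
  proof -
    have a: "a \<in> cp B I" and x: "x \<in> cp B I" using that L X by auto
    show ?thesis
      using cp_finsuppI[OF a] cp_finsuppI[OF cp_mult_in_cp[OF a x]] by (simp add: cp_mult_smult_left)
  qed
  hence "cp_smult r z = (\<Sum>(a, x, b)\<leftarrow>map (\<lambda>(a, x, b). (cp_smult r a, x, b)) L. a \<star> x \<star> b)"
    unfolding z cp_smult_sum_list map_map
    by (intro arg_cong[where f = sum_list] map_cong refl) (auto split: prod.splits)
  moreover have "set (map (\<lambda>(a, x, b). (cp_smult r a, x, b)) L) \<subseteq> cp B I \<times> X \<times> cp B I"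
    using L by (auto simp: smult_in_cp)
  ultimately show ?thesis unfolding cp_ideal_generated_def by blast
qed

lemma cp_ideal_cp_ideal_generated:
  assumes X: "X \<subseteq> cp B I"
  shows "cp_ideal B I \<phi> (cp_ideal_generated B I \<phi> X)"
proof -
  have zero: "0 \<in> cp_ideal_generated B I \<phi> X"
    unfolding cp_ideal_generated_def by (auto intro!: exI[of _ "[]"])
  have add: "x + y \<in> cp_ideal_generated B I \<phi> X"
    if x: "x \<in> cp_ideal_generated B I \<phi> X" and y: "y \<in> cp_ideal_generated B I \<phi> X" for x y
  proof -
    obtain L1 where "set L1 \<subseteq> cp B I \<times> X \<times> cp B I" "x = (\<Sum>(a, x, b)\<leftarrow>L1. a \<star> x \<star> b)"
      using x unfolding cp_ideal_generated_def by blast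
    moreover obtain L2 where "set L2 \<subseteq> cp B I \<times> X \<times> cp B I" "y = (\<Sum>(a, x, b)\<leftarrow>L2. a \<star> x \<star> b)"
      using y unfolding cp_ideal_generated_def by blast
    ultimately show ?thesis
      unfolding cp_ideal_generated_def by (intro CollectI exI[of _ "L1 @ L2"]) auto
  qed
  show ?thesis
    unfolding cp_ideal_def cp_zero_eq cp_add_eq
    by (intro conjI ballI allI zero add cp_ideal_generated_subset_cp cp_ideal_generated_smult
        cp_ideal_generated_mult_left cp_ideal_generated_mult_right X)
qed

lemma delta_in_cp_ideal_generated:
  assumes "V \<in> I g" and "V \<in> S"
  shows "delta B V g \<in> cp_ideal_generated B I \<phi> ((\<lambda>V. delta B V 0) ` S)"
proof -
  have V: "V \<in> I 0" using assms(1) I_mem_B I_zero by simp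
  have "delta B V g = delta B V 0 \<star> delta B V 0 \<star> delta B V g"
    by (simp add: delta_zero_mult_delta[OF V] delta_zero_mult_delta[OF assms(1)])
  moreover have "delta B V 0 \<in> cp B I" "delta B V g \<in> cp B I"
    using delta_in_cp V assms(1) by blast+
  ultimately show ?thesis
    unfolding cp_ideal_generated_def using assms(2)
    by (intro CollectI exI[of _ "[(delta B V 0, delta B V 0, delta B V g)]"]) auto
qed

lemma dsum_cp_lmod_in_cp:
  assumes "y \<in> dsum Idx (\<lambda>i. cp_lmod B I \<phi> (x i))" "i \<in> Idx" "x i \<in> cp B I"
  shows "y i \<in> cp B I"
proof -
  obtain a where "a \<in> cp B I" "y i = a \<star> x i"
    using assms(1,2) unfolding dsum_def cp_lmod_def by blast
  thus ?thesis using assms(3) by (simp add: cp_mult_in_cp)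
qed

lemma surj_lmod_hom_sandwich:
  fixes a x b :: "'i \<Rightarrow> 'g \<Rightarrow> 'b set \<Rightarrow> 'r::comm_ring_1"
  assumes fin: "finite Idx"
    and a: "\<And>i. i \<in> Idx \<Longrightarrow> a i \<in> cp B I" and x: "\<And>i. i \<in> Idx \<Longrightarrow> x i \<in> cp B I"
    and b: "\<And>i. i \<in> Idx \<Longrightarrow> b i \<in> cp B I"
    and u: "u \<in> cp B I" and idem: "u \<star> u = u" and u_eq: "u = (\<Sum>i\<in>Idx. a i \<star> x i \<star> b i)"
  shows "surj_lmod_hom B I \<phi> (dsum Idx (\<lambda>i. cp_lmod B I \<phi> (x i))) (cp_lmod B I \<phi> u)
           (\<lambda>y. \<Sum>i\<in>Idx. y i \<star> b i \<star> u)"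
proof -
  let ?D = "dsum Idx (\<lambda>i. cp_lmod B I \<phi> (x i))"
  let ?F = "\<lambda>y. \<Sum>i\<in>Idx. y i \<star> b i \<star> u"
  have D_cp: "y i \<in> cp B I" if "y \<in> ?D" "i \<in> Idx" for y i
    using dsum_cp_lmod_in_cp[OF that x[OF that(2)]] .
  have F_eq: "?F y = (\<Sum>i\<in>Idx. y i \<star> b i) \<star> u" if y: "y \<in> ?D" for y
    by (rule cp_mult_sum_left[symmetric]) (use D_cp[OF y] b in \<open>blast intro: cp_mult_in_cp\<close>)
  have add: "?F (\<lambda>i. cp_add (y i) (z i)) = cp_add (?F y) (?F z)" if "y \<in> ?D" "z \<in> ?D" for y z
  proof -
    have "(y i + z i) \<star> b i \<star> u = y i \<star> b i \<star> u + z i \<star> b i \<star> u" if "i \<in> Idx" for i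
      using cp_finsuppI[OF D_cp[OF \<open>y \<in> ?D\<close> that]] cp_finsuppI[OF D_cp[OF \<open>z \<in> ?D\<close> that]]
        cp_finsuppI[OF b[OF that]]
      by (simp add: cp_mult_add_left cp_finsupp_mult)
    thus ?thesis unfolding cp_add_eq by (simp add: sum.distrib)
  qed
  have linear: "?F (\<lambda>i. c \<star> y i) = c \<star> ?F y" if c: "c \<in> cp B I" and y: "y \<in> ?D" for c y
    unfolding cp_mult_sum_right
  proof (rule sum.cong[OF refl])
    fix i assume i: "i \<in> Idx"
    show "c \<star> y i \<star> b i \<star> u = c \<star> (y i \<star> b i \<star> u)"
      using cp_mult_assoc[OF c D_cp[OF y i] b[OF i]]
        cp_mult_assoc[OF c cp_mult_in_cp[OF D_cp[OF y i] b[OF i]] u] by simp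
  qed
  have image_subset: "?F ` ?D \<subseteq> cp_lmod B I \<phi> u"
  proof
    fix z assume "z \<in> ?F ` ?D"
    then obtain y where y: "y \<in> ?D" and z: "z = ?F y" by blast
    have "(\<Sum>i\<in>Idx. y i \<star> b i) \<in> cp B I"
      using D_cp[OF y] b by (intro sum_in_cp cp_mult_in_cp)
    thus "z \<in> cp_lmod B I \<phi> u" unfolding cp_lmod_def z F_eq[OF y] by blast
  qed
  have subset_image: "cp_lmod B I \<phi> u \<subseteq> ?F ` ?D"
  proof
    fix z assume "z \<in> cp_lmod B I \<phi> u"
    then obtain c where c: "c \<in> cp B I" and z: "z = c \<star> u" unfolding cp_lmod_def by blast
    define y where "y i = (if i \<in> Idx then c \<star> a i \<star> x i else 0)" for i
    have y: "y \<in> ?D"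
      unfolding dsum_def cp_lmod_def cp_zero_eq y_def
      using c a fin by (auto intro: cp_mult_in_cp finite_subset[of _ Idx])
    \<comment> \<open>idempotence of u lets the decomposition of u act on the left factor of c u u\<close>
    have "z = c \<star> u \<star> u" using cp_mult_assoc[OF c u u] idem z by simp
    also have "c \<star> u = (\<Sum>i\<in>Idx. c \<star> (a i \<star> x i \<star> b i))"
      by (subst u_eq) (rule cp_mult_sum_right)
    also have "\<dots> = (\<Sum>i\<in>Idx. y i \<star> b i)"
    proof (rule sum.cong[OF refl])
      fix i assume i: "i \<in> Idx"
      show "c \<star> (a i \<star> x i \<star> b i) = y i \<star> b i"
        using cp_mult_assoc[OF c cp_mult_in_cp[OF a[OF i] x[OF i]] b[OF i]]
          cp_mult_assoc[OF c a[OF i] x[OF i]] i by (simp add: y_def)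
    qed
    finally have "z = ?F y" using F_eq[OF y] by simp
    thus "z \<in> ?F ` ?D" using y by blast
  qed
  show ?thesis
    unfolding surj_lmod_hom_def
    by (intro conjI ballI equalityI add linear image_subset subset_image)
qed

lemma surj_lmod_hom_if_delta_in_cp_ideal_generated:
  fixes U :: 'b
  assumes "infinite (UNIV :: 'i set)" and U: "U \<in> B" and S: "S \<subseteq> B"
    and "delta B U 0 \<in> cp_ideal_generated B I \<phi>
           ((\<lambda>V. delta B V 0) ` S :: ('g \<Rightarrow> 'b set \<Rightarrow> 'r::comm_ring_1) set)"
  shows "\<exists>(Idx :: 'i set) Us (F :: ('i \<Rightarrow> 'g \<Rightarrow> 'b set \<Rightarrow> 'r) \<Rightarrow> 'g \<Rightarrow> 'b set \<Rightarrow> 'r).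
           (\<forall>i\<in>Idx. Us i \<in> S) \<and>
           surj_lmod_hom B I \<phi> (dsum Idx (\<lambda>i. cp_lmod B I \<phi> (delta B (Us i) 0)))
             (cp_lmod B I \<phi> (delta B U 0)) F"
proof -
  from assms(4) obtain n and a :: "nat \<Rightarrow> 'g \<Rightarrow> 'b set \<Rightarrow> 'r" and V
    and b :: "nat \<Rightarrow> 'g \<Rightarrow> 'b set \<Rightarrow> 'r"
    where abV: "\<forall>j<n. a j \<in> cp B I \<and> V j \<in> S \<and> b j \<in> cp B I"
      and u: "delta B U 0 = (\<Sum>j<n. a j \<star> delta B (V j) 0 \<star> b j)"
    by (rule cp_ideal_generated_image_obtain)
  obtain Idx :: "'i set" where Idx: "finite Idx" "card Idx = n"
    using infinite_arbitrarily_large[OF assms(1)] by blast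
  then obtain j where j: "bij_betw j Idx {..<n}"
    using ex_bij_betw_finite_nat[of Idx] by (auto simp: atLeast0LessThan)
  hence j_lt: "i \<in> Idx \<Longrightarrow> j i < n" for i by (auto simp: bij_betw_def)
  have "surj_lmod_hom B I \<phi> (dsum Idx (\<lambda>i. cp_lmod B I \<phi> (delta B (V (j i)) 0)))
      (cp_lmod B I \<phi> (delta B U 0)) (\<lambda>y. \<Sum>i\<in>Idx. y i \<star> b (j i) \<star> delta B U 0)"
  proof (rule surj_lmod_hom_sandwich)
    show "a (j i) \<in> cp B I" "b (j i) \<in> cp B I" "delta B (V (j i)) 0 \<in> cp B I" if "i \<in> Idx" for i
      using abV j_lt[OF that] S delta_zero_in_cp by blast+
    show "delta B U 0 \<star> delta B U 0 = delta B U 0"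
      using delta_zero_mult_delta[of U 0] U I_zero by simp
    show "delta B U 0 = (\<Sum>i\<in>Idx. a (j i) \<star> delta B (V (j i)) 0 \<star> b (j i))"
      unfolding u by (rule sum.reindex_bij_betw[OF j, symmetric])
  qed (use Idx U delta_zero_in_cp in auto)
  moreover have "\<forall>i\<in>Idx. V (j i) \<in> S" using abV j_lt by blast
  ultimately show ?thesis by (intro exI[of _ Idx] exI[of _ "\<lambda>i. V (j i)"] exI conjI)
qed

end

theorem theorem4p13:
  fixes B1 B2 :: "'b::boolean_algebra set"
    and I1 I2 :: "'g::group_add \<Rightarrow> 'b set"
    and \<phi>1 \<phi>2 :: "'g \<Rightarrow> 'b \<Rightarrow> 'b"
    and U :: 'b
  assumes sub: "partial_subaction B1 I1 \<phi>1 B2 I2 \<phi>2"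
    and ideal: "gba_ideal B2 B1"
    and full: "\<forall>J :: ('g \<Rightarrow> 'b set \<Rightarrow> 'r::comm_ring_1) set.
                 cp_ideal B2 I2 \<phi>2 J \<and> cp_span B2 I1 \<subseteq> J \<longrightarrow> J = cp B2 I2"
    and U: "U \<in> B2"
  shows "\<exists>(Idx :: (('g \<Rightarrow> 'b set \<Rightarrow> 'r) \<times> nat) set) Us
            (F :: ((('g \<Rightarrow> 'b set \<Rightarrow> 'r) \<times> nat) \<Rightarrow> 'g \<Rightarrow> 'b set \<Rightarrow> 'r) \<Rightarrow> 'g \<Rightarrow> 'b set \<Rightarrow> 'r).
           (\<forall>i\<in>Idx. Us i \<in> B1) \<and>
           surj_lmod_hom B2 I2 \<phi>2
             (dsum Idx (\<lambda>i. cp_lmod B2 I2 \<phi>2 (delta B2 (Us i) 0)))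
             (cp_lmod B2 I2 \<phi>2 (delta B2 U 0)) F"
proof -
  interpret A1: gba_partial_action B1 I1 \<phi>1
    using sub by (simp add: partial_subaction_def gba_partial_action_def)
  interpret A2: gba_partial_action B2 I2 \<phi>2
    using sub by (simp add: partial_subaction_def gba_partial_action_def)
  have B12: "B1 \<subseteq> B2" and I12: "I1 g \<subseteq> I2 g" for g
    using sub by (auto simp: partial_subaction_def)
  let ?X = "(\<lambda>V. delta B2 V 0) ` B1 :: ('g \<Rightarrow> 'b set \<Rightarrow> 'r) set"
  have X: "?X \<subseteq> cp B2 I2" using B12 by (auto intro!: A2.delta_zero_in_cp)
  note ideal_X = A2.cp_ideal_cp_ideal_generated[OF X]
  have "cp_span B2 I1 \<subseteq> cp_ideal_generated B2 I2 \<phi>2 ?X"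
  proof (rule cp_span_subset_cp_ideal[OF ideal_X])
    fix V g assume "V \<in> I1 g"
    thus "delta B2 V g \<in> cp_ideal_generated B2 I2 \<phi>2 ?X"
      using I12 A1.I_subset by (intro A2.delta_in_cp_ideal_generated) blast+
  qed
  hence "cp_ideal_generated B2 I2 \<phi>2 ?X = cp B2 I2"
    by (rule full[rule_format, OF conjI[OF ideal_X]])
  hence "delta B2 U 0 \<in> cp_ideal_generated B2 I2 \<phi>2 ?X"
    using A2.delta_zero_in_cp[OF U] by simp
  thus ?thesis
    using U B12 by (intro A2.surj_lmod_hom_if_delta_in_cp_ideal_generated) (simp_all add: finite_prod)
qed

end
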